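(* Let $G=(V,E)$ be a finite undirected graph with $V=\{1,\dots,n\}$ and let $H=(V,E')$ be a subgraph of $G$ with the same vertex set, i.e. $E'\subseteq E$. Then $A_H$ is positive definite for every $A\in\mathbb{P}_G$ if and only if $H=G_1\cup\dots\cup G_k$, where $G_1,\dots,G_k$ are induced subgraphs of $G$ that are pairwise disconnected in $H$ (i.e. the vertex sets of the $G_i$ partition $V$, each $G_i$ is the subgraph of $G$ induced by its vertex set, and $H$ has no edge between distinct $G_i$).
   Context: For a symmetric $n\times n$ real matrix $A=(a_{ij})$ and an undirected graph $K=(V,F)$ on $V=\{1,\dots,n\}$, the thresholded matrix $A_K$ is defined by $(A_K)_{ij}=a_{ij}$ if $i=j$ or $(i,j)\in F$, and $(A_K)_{ij}=0$ otherwise. $\mathbb{P}_G$ denotes the set of symmetric positive definite $n\times n$ real matrices $A$ with $a_{ij}=0$ whenever $i\neq j$ and $(i,j)\notin E$. *)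

theory Defs
  imports "HOL-Analysis.Analysis" "HOL-Library.Disjoint_Sets"
begin

text \<open>Vertices are the elements of a finite type 'n (playing the role of {1..n});
  an undirected graph is given by a symmetric irreflexive edge set.\<close>

definition pos_def_mat :: "real^'n^'n \<Rightarrow> bool" where
  "pos_def_mat A \<longleftrightarrow> transpose A = A \<and> (\<forall>x. x \<noteq> 0 \<longrightarrow> x \<bullet> (A *v x) > 0)"

definition thresholded :: "('n \<times> 'n) set \<Rightarrow> real^'n^'n \<Rightarrow> real^'n^'n" where
  "thresholded K A = (\<chi> i j. if i = j \<or> (i, j) \<in> K then A $ i $ j else 0)"

definition PG :: "('n \<times> 'n) set \<Rightarrow> (real^'n^'n) set" where
  "PG E = {A. pos_def_mat A \<and> (\<forall>i j. i \<noteq> j \<and> (i, j) \<notin> E \<longrightarrow> A $ i $ j = 0)}"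

end

theory Submission
  imports Defs
begin

text \<open>If E' is the restriction of E to the blocks of a partition, then A_E' is the block-diagonal
  part of A, whose quadratic form is the sum of the quadratic forms of A on the blocks.
  Conversely, take the connected components of E' as blocks. If an edge ij of E inside a
  component S is missing from E', let A = L + D + b (e_i e_j^T + e_j e_i^T), where L is the
  Laplacian of E', D the coordinate projection onto the complement of S and b > 0 small.
  Then A_E' = L + D annihilates the indicator vector of S, whereas A is positive definite:
  along a path from i to j in E' the Laplacian energy controls (x_j - x_i)^2, which absorbs
  the perturbation 2 b x_i x_j.\<close>

lemma inner_matrix_vector_eq_double_sum:
  fixes M :: "real^'n^'n"
  shows "x \<bullet> (M *v x) = (\<Sum>u\<in>UNIV. \<Sum>v\<in>UNIV. x$u * M$u$v * x$v)"
  by (simp add: inner_vec_def matrix_vector_mult_def sum_distrib_left mult.assoc)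

lemma transpose_eq_self_iff: "transpose A = A \<longleftrightarrow> (\<forall>u v. A$u$v = A$v$u)"
  by (auto simp: transpose_def vec_eq_iff)

lemma transpose_add: "transpose (A + B) = transpose A + transpose B"
  by (simp add: transpose_def vec_eq_iff)

lemma pos_def_mat_nonneg: "pos_def_mat A \<Longrightarrow> 0 \<le> x \<bullet> (A *v x)"
  unfolding pos_def_mat_def by (cases "x = 0") (auto intro: less_imp_le)

definition restrict_vec :: "'n set \<Rightarrow> real^'n \<Rightarrow> real^'n" where
  "restrict_vec B x = (\<chi> u. if u \<in> B then x$u else 0)"

definition block_part :: "'n set set \<Rightarrow> real^'n^'n \<Rightarrow> real^'n^'n" where
  "block_part P M = (\<chi> u v. if \<exists>B\<in>P. u \<in> B \<and> v \<in> B then M$u$v else 0)"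

lemma sum_blocks_containing_both:
  assumes "partition_on A P" "finite P"
  shows "(\<Sum>B\<in>P. if u \<in> B \<and> v \<in> B then 1 else 0)
       = (if \<exists>B\<in>P. u \<in> B \<and> v \<in> B then 1 else (0::real))"
proof (cases "\<exists>B\<in>P. u \<in> B \<and> v \<in> B")
  case True
  then obtain B0 where "B0 \<in> P" "u \<in> B0" "v \<in> B0" by auto
  then have "P \<inter> {B. u \<in> B \<and> v \<in> B} = {B0}"
    using partition_onD2[OF assms(1)] unfolding disjoint_def by auto
  with True assms(2) show ?thesis by (simp add: sum.If_cases)
next
  case False
  then show ?thesis by (simp add: sum.neutral)
qed

lemma inner_block_part_eq_sum:
  fixes M :: "real^'n::finite^'n"
  assumes part: "partition_on UNIV P"
  shows "x \<bullet> (block_part P M *v x) = (\<Sum>B\<in>P. restrict_vec B x \<bullet> (M *v restrict_vec B x))"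
proof -
  have "finite P" using finite_elements[OF _ part] by simp
  have "x \<bullet> (block_part P M *v x)
      = (\<Sum>u\<in>UNIV. \<Sum>v\<in>UNIV. x$u * M$u$v * x$v * (\<Sum>B\<in>P. if u \<in> B \<and> v \<in> B then 1 else 0))"
    unfolding inner_matrix_vector_eq_double_sum block_part_def
      sum_blocks_containing_both[OF part \<open>finite P\<close>]
    by (intro sum.cong refl) auto
  also have "\<dots> = (\<Sum>u\<in>UNIV. \<Sum>v\<in>UNIV. \<Sum>B\<in>P.
      restrict_vec B x $ u * M$u$v * restrict_vec B x $ v)"
    unfolding sum_distrib_left by (intro sum.cong refl) (auto simp: restrict_vec_def)
  also have "\<dots> = (\<Sum>B\<in>P. \<Sum>u\<in>UNIV. \<Sum>v\<in>UNIV.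
      restrict_vec B x $ u * M$u$v * restrict_vec B x $ v)"
    by (subst sum.swap) (simp add: sum.swap[of _ UNIV P])
  finally show ?thesis unfolding inner_matrix_vector_eq_double_sum .
qed

lemma pos_def_mat_block_part:
  fixes M :: "real^'n::finite^'n"
  assumes part: "partition_on UNIV P" and M: "pos_def_mat M"
  shows "pos_def_mat (block_part P M)"
  unfolding pos_def_mat_def
proof (intro conjI allI impI)
  show "transpose (block_part P M) = block_part P M"
    using M unfolding pos_def_mat_def transpose_eq_self_iff by (auto simp: block_part_def)
next
  fix x :: "real^'n" assume "x \<noteq> 0"
  then obtain u where u: "x $ u \<noteq> 0" by (metis vec_eq_iff zero_index)
  then obtain B where B: "B \<in> P" "u \<in> B" using partition_onD1[OF part] by auto
  have "restrict_vec B x $ u \<noteq> 0" using u B by (simp add: restrict_vec_def)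
  then have "restrict_vec B x \<noteq> 0" by auto
  then have "0 < restrict_vec B x \<bullet> (M *v restrict_vec B x)"
    using M unfolding pos_def_mat_def by auto
  then show "0 < x \<bullet> (block_part P M *v x)"
    unfolding inner_block_part_eq_sum[OF part]
    by (intro sum_pos2[OF finite_elements[OF _ part] B(1)]) (auto intro: pos_def_mat_nonneg[OF M])
qed

lemma thresholded_eq_block_part:
  assumes part: "partition_on UNIV P"
    and blocks: "\<forall>i j. (i, j) \<in> E' \<longleftrightarrow> (i, j) \<in> E \<and> (\<exists>B\<in>P. i \<in> B \<and> j \<in> B)"
    and A: "A \<in> PG E"
  shows "thresholded E' A = block_part P A"
proof -
  have "thresholded E' A $ u $ v = block_part P A $ u $ v" for u v
  proof (cases "u = v")
    case True
    moreover obtain B where "B \<in> P" "u \<in> B" using partition_onD1[OF part] by auto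
    ultimately show ?thesis by (auto simp: thresholded_def block_part_def)
  next
    case False
    then show ?thesis
      using A blocks by (auto simp: thresholded_def block_part_def PG_def)
  qed
  then show ?thesis by (simp add: vec_eq_iff)
qed

lemma pos_def_thresholded_if_partition:
  assumes "partition_on UNIV P"
    and "\<forall>i j. (i, j) \<in> E' \<longleftrightarrow> (i, j) \<in> E \<and> (\<exists>B\<in>P. i \<in> B \<and> j \<in> B)"
    and "A \<in> PG E"
  shows "pos_def_mat (thresholded E' A)"
  unfolding thresholded_eq_block_part[OF assms]
  using assms(3) by (intro pos_def_mat_block_part[OF assms(1)]) (simp add: PG_def)

definition dirichlet_energy :: "('n \<times> 'n) set \<Rightarrow> real^'n \<Rightarrow> real" where
  "dirichlet_energy K x = (\<Sum>u\<in>UNIV. \<Sum>v\<in>UNIV. if (u, v) \<in> K then (x$u - x$v)^2 else 0)"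

definition laplacian :: "('n \<times> 'n) set \<Rightarrow> real^'n^'n" where
  "laplacian K = (\<chi> u v. (if u = v then real (card {w. (u, w) \<in> K}) else 0)
                             - (if (u, v) \<in> K then 1 else 0))"

lemma dirichlet_energy_nonneg: "0 \<le> dirichlet_energy K x"
  unfolding dirichlet_energy_def by (intro sum_nonneg) auto

lemma edge_le_dirichlet_energy:
  fixes x :: "real^'n::finite"
  assumes "(u, v) \<in> K"
  shows "(x$u - x$v)^2 \<le> dirichlet_energy K x"
proof -
  have "(x$u - x$v)^2 \<le> (\<Sum>v'\<in>UNIV. if (u, v') \<in> K then (x$u - x$v')^2 else 0)"
    using member_le_sum[of v UNIV "\<lambda>v'. if (u, v') \<in> K then (x$u - x$v')^2 else 0"] assms
    by auto
  also have "\<dots> \<le> dirichlet_energy K x"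
    unfolding dirichlet_energy_def
    by (rule member_le_sum[where f = "\<lambda>u. \<Sum>v'\<in>UNIV. if (u, v') \<in> K then (x$u - x$v')^2 else 0"])
      (auto intro: sum_nonneg)
  finally show ?thesis .
qed

lemma rtrancl_imp_diff_bounded_by_energy:
  fixes K :: "('n::finite \<times> 'n) set"
  assumes "(i, w) \<in> K\<^sup>*"
  shows "\<exists>m::nat. \<forall>x. \<bar>x$w - x$i\<bar> \<le> real m * sqrt (dirichlet_energy K x)"
  using assms
proof (induction rule: rtrancl_induct)
  case base
  show ?case by (intro exI[of _ 0]) simp
next
  case (step v w)
  then obtain m where m: "\<forall>x. \<bar>x$v - x$i\<bar> \<le> real m * sqrt (dirichlet_energy K x)" by auto
  have "\<bar>x$w - x$i\<bar> \<le> real (Suc m) * sqrt (dirichlet_energy K x)" for x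
  proof -
    have "\<bar>x$v - x$w\<bar> \<le> sqrt (dirichlet_energy K x)"
      using edge_le_dirichlet_energy[OF \<open>(v, w) \<in> K\<close>, of x] by (simp add: real_le_rsqrt)
    with m[rule_format, of x] show ?thesis by (simp add: algebra_simps abs_le_iff)
  qed
  then show ?case by blast
qed

lemma dirichlet_energy_eq_0_imp_eq:
  assumes "dirichlet_energy K x = 0" and "(i, w) \<in> K\<^sup>*"
  shows "x$w = x$i"
  using assms(2)
proof (induction rule: rtrancl_induct)
  case (step v w)
  then show ?case using edge_le_dirichlet_energy[OF step(2), of x] assms(1) by simp
qed simp

lemma laplacian_row_form:
  "(\<Sum>v\<in>UNIV. x$u * laplacian K $ u $ v * x$v)
     = (\<Sum>v\<in>UNIV. if (u, v) \<in> K then (x$u)^2 - x$u * x$v else 0)"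
proof -
  have "(\<Sum>v\<in>UNIV. x$u * laplacian K $ u $ v * x$v)
      = (\<Sum>v\<in>UNIV. if v = u then (x$u)^2 * card {w. (u, w) \<in> K} else 0)
        - (\<Sum>v\<in>UNIV. if (u, v) \<in> K then x$u * x$v else 0)"
    unfolding sum_subtractf[symmetric] laplacian_def
    by (intro sum.cong refl) (auto simp: algebra_simps power2_eq_square)
  also have "\<dots> = (\<Sum>v\<in>UNIV. if (u, v) \<in> K then (x$u)^2 else 0)
        - (\<Sum>v\<in>UNIV. if (u, v) \<in> K then x$u * x$v else 0)"
    by (simp add: sum.If_cases Int_def)
  also have "\<dots> = (\<Sum>v\<in>UNIV. if (u, v) \<in> K then (x$u)^2 - x$u * x$v else 0)"
    unfolding sum_subtractf[symmetric] by (intro sum.cong refl) auto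
  finally show ?thesis .
qed

lemma dirichlet_energy_eq_double_sum:
  assumes "sym K"
  shows "dirichlet_energy K x
       = 2 * (\<Sum>u\<in>UNIV. \<Sum>v\<in>UNIV. if (u, v) \<in> K then (x$u)^2 - x$u * x$v else 0)"
proof -
  define f where "f u v = (if (u, v) \<in> K then (x$u)^2 - x$u * x$v else 0)" for u v
  have "dirichlet_energy K x = (\<Sum>u\<in>UNIV. \<Sum>v\<in>UNIV. f u v + f v u)"
    unfolding dirichlet_energy_def f_def
    using assms by (intro sum.cong refl) (auto simp: power2_eq_square algebra_simps dest: symD)
  also have "\<dots> = (\<Sum>u\<in>UNIV. \<Sum>v\<in>UNIV. f u v) + (\<Sum>v\<in>UNIV. \<Sum>u\<in>UNIV. f u v)"
    by (simp only: sum.distrib)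
  also have "(\<Sum>v\<in>UNIV. \<Sum>u\<in>UNIV. f u v) = (\<Sum>u\<in>UNIV. \<Sum>v\<in>UNIV. f u v)"
    by (rule sum.swap)
  finally show ?thesis unfolding f_def by simp
qed

lemma inner_laplacian:
  assumes "sym K"
  shows "x \<bullet> (laplacian K *v x) = dirichlet_energy K x / 2"
  unfolding inner_matrix_vector_eq_double_sum laplacian_row_form
    dirichlet_energy_eq_double_sum[OF assms] by simp

lemma transpose_laplacian: "sym K \<Longrightarrow> transpose (laplacian K) = laplacian K"
  unfolding transpose_eq_self_iff laplacian_def by (auto dest: symD)

lemma laplacian_eq_0: "u \<noteq> v \<Longrightarrow> (u, v) \<notin> K \<Longrightarrow> laplacian K $ u $ v = 0"
  by (simp add: laplacian_def)

definition coord_projection :: "'n set \<Rightarrow> real^'n^'n" where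
  "coord_projection S = (\<chi> u v. if u = v \<and> u \<in> S then 1 else 0)"

lemma inner_coord_projection:
  "x \<bullet> (coord_projection S *v x) = (\<Sum>u\<in>S. (x$u)^2)"
proof -
  have "(\<Sum>v\<in>UNIV. x$u * coord_projection S $ u $ v * x$v) = (if u \<in> S then (x$u)^2 else 0)"
    for u
  proof -
    have "(\<Sum>v\<in>UNIV. x$u * coord_projection S $ u $ v * x$v)
        = (\<Sum>v\<in>UNIV. if v = u then (if u \<in> S then (x$u)^2 else 0) else 0)"
      by (intro sum.cong refl) (auto simp: coord_projection_def power2_eq_square)
    then show ?thesis by simp
  qed
  then show ?thesis
    unfolding inner_matrix_vector_eq_double_sum by (simp add: sum.If_cases Int_def)
qed

lemma transpose_coord_projection: "transpose (coord_projection S) = coord_projection S"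
  unfolding transpose_eq_self_iff coord_projection_def by auto

lemma coord_projection_eq_0: "u \<noteq> v \<Longrightarrow> coord_projection S $ u $ v = 0"
  by (simp add: coord_projection_def)

definition sym_unit_mat :: "'n \<Rightarrow> 'n \<Rightarrow> real^'n^'n" where
  "sym_unit_mat i j =
     (\<chi> u v. (if u = i \<and> v = j then 1 else 0) + (if u = j \<and> v = i then 1 else 0))"

lemma inner_sym_unit_mat: "x \<bullet> (sym_unit_mat i j *v x) = 2 * x$i * x$j"
proof -
  have "x \<bullet> (sym_unit_mat i j *v x)
      = (\<Sum>u\<in>UNIV. \<Sum>v\<in>UNIV. (if v = j then if u = i then x$i * x$j else 0 else 0)
          + (if v = i then if u = j then x$i * x$j else 0 else 0))"
    unfolding inner_matrix_vector_eq_double_sum sym_unit_mat_def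
    by (intro sum.cong refl) (auto simp: algebra_simps)
  then show ?thesis by (simp add: sum.distrib)
qed

lemma transpose_sym_unit_mat: "transpose (sym_unit_mat i j) = sym_unit_mat i j"
  unfolding transpose_eq_self_iff sym_unit_mat_def by (intro allI, cases "i = j") simp_all

lemma sym_unit_mat_eq_0:
  "(u, v) \<noteq> (i, j) \<Longrightarrow> (u, v) \<noteq> (j, i) \<Longrightarrow> sym_unit_mat i j $ u $ v = 0"
  unfolding sym_unit_mat_def by (simp only: vec_lambda_beta prod.inject if_False add_0)

lemma laplacian_plus_coord_projection_not_pos_def:
  fixes K :: "('n::finite \<times> 'n) set"
  assumes "sym K"
  shows "\<not> pos_def_mat (laplacian K + coord_projection (- {v. (i, v) \<in> K\<^sup>*}))"
proof -
  define S where "S = {v. (i, v) \<in> K\<^sup>*}"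
  define x :: "real^'n" where "x = (\<chi> u. if u \<in> S then 1 else 0)"
  have "x $ i \<noteq> 0" by (simp add: x_def S_def)
  then have "x \<noteq> 0" by auto
  have closed: "u \<in> S \<longleftrightarrow> v \<in> S" if "(u, v) \<in> K" for u v
    using that symD[OF assms that] unfolding S_def by (auto intro: rtrancl_into_rtrancl)
  have "dirichlet_energy K x = 0"
    unfolding dirichlet_energy_def by (intro sum.neutral ballI) (auto simp: x_def dest: closed)
  then have "x \<bullet> ((laplacian K + coord_projection (- S)) *v x) = 0"
    by (simp add: matrix_vector_mult_add_rdistrib inner_add_right inner_laplacian[OF assms]
        inner_coord_projection x_def)
  with \<open>x \<noteq> 0\<close> show ?thesis unfolding pos_def_mat_def S_def by force
qed

lemma perturbation_absorbed_by_energy: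
  fixes a c b D :: real
  assumes "\<bar>c - a\<bar> \<le> m * sqrt D" and "0 \<le> m" and "0 \<le> D" and "0 \<le> b" and "b * m^2 \<le> 1/2"
  shows "D/4 + b/2 * (a + c)^2 \<le> D/2 + 2 * b * a * c"
proof -
  have "(c - a)^2 \<le> (m * sqrt D)^2"
    using assms(1) by (metis abs_ge_zero power2_abs power_mono)
  also have "\<dots> = m^2 * D" using assms(3) by (simp add: power_mult_distrib)
  finally have "b * (c - a)^2 \<le> b * (m^2 * D)" using assms(4) by (rule mult_left_mono)
  also have "\<dots> \<le> D/2" using mult_right_mono[OF assms(5,3)] by (simp add: mult.assoc)
  finally have "b * (c - a)^2 \<le> D/2" .
  moreover have "2 * b * a * c = b/2 * (a + c)^2 - b/2 * (c - a)^2"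
    by (simp add: power2_eq_square algebra_simps)
  ultimately show ?thesis by linarith
qed

lemma pos_def_perturbed_laplacian:
  fixes K :: "('n::finite \<times> 'n) set"
  assumes "sym K" and "(i, j) \<in> K\<^sup>*"
  shows "\<exists>b>0. pos_def_mat
           (laplacian K + coord_projection (- {v. (i, v) \<in> K\<^sup>*}) + b *\<^sub>R sym_unit_mat i j)"
proof -
  define S where "S = {v. (i, v) \<in> K\<^sup>*}"
  obtain m :: nat where m: "\<And>x. \<bar>x$j - x$i\<bar> \<le> real m * sqrt (dirichlet_energy K x)"
    using rtrancl_imp_diff_bounded_by_energy[OF assms(2)] by blast
  define b :: real where "b = 1 / (2 * (real m + 1)^2)"
  have "b > 0" by (simp add: b_def)
  have "(real m)^2 \<le> (real m + 1)^2" by (intro power_mono) auto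
  then have bm: "b * (real m)^2 \<le> 1/2" by (simp add: b_def field_simps)
  define A where "A = laplacian K + coord_projection (- S) + b *\<^sub>R sym_unit_mat i j"
  have form: "x \<bullet> (A *v x)
      = dirichlet_energy K x / 2 + (\<Sum>u\<in>- S. (x$u)^2) + 2 * b * x$i * x$j" for x
    by (simp add: A_def matrix_vector_mult_add_rdistrib inner_add_right
        scaleR_matrix_vector_assoc[symmetric] inner_laplacian[OF assms(1)]
        inner_coord_projection inner_sym_unit_mat)
  have "transpose A = A"
    by (simp add: A_def transpose_add transpose_scalar transpose_laplacian[OF assms(1)]
        transpose_coord_projection transpose_sym_unit_mat)
  moreover have "0 < x \<bullet> (A *v x)" if "x \<noteq> 0" for x
  proof (rule ccontr)
    assume "\<not> 0 < x \<bullet> (A *v x)"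
    moreover have "dirichlet_energy K x / 4 + b/2 * (x$i + x$j)^2
        \<le> dirichlet_energy K x / 2 + 2 * b * x$i * x$j"
      by (rule perturbation_absorbed_by_energy[OF m of_nat_0_le_iff dirichlet_energy_nonneg
            less_imp_le[OF \<open>b > 0\<close>] bm])
    moreover have "0 \<le> b/2 * (x$i + x$j)^2" using \<open>b > 0\<close> by simp
    moreover have "0 \<le> (\<Sum>u\<in>- S. (x$u)^2)" by (simp add: sum_nonneg)
    moreover note dirichlet_energy_nonneg[of K x]
    ultimately have D0: "dirichlet_energy K x = 0" and R0: "(\<Sum>u\<in>- S. (x$u)^2) = 0"
      and "b/2 * (x$i + x$j)^2 = 0"
      unfolding form by linarith+
    then have "x$i + x$j = 0" using \<open>b > 0\<close> by simp
    moreover have "x$w = x$i" if "w \<in> S" for w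
      using dirichlet_energy_eq_0_imp_eq[OF D0] that unfolding S_def by simp
    moreover have "x$u = 0" if "u \<notin> S" for u
      using R0 that by (simp add: sum_nonneg_eq_0_iff)
    moreover have "j \<in> S" using assms(2) by (simp add: S_def)
    ultimately have "x$w = 0" for w by (cases "w \<in> S") auto
    then show False using \<open>x \<noteq> 0\<close> by (simp add: vec_eq_iff)
  qed
  ultimately show ?thesis using \<open>b > 0\<close> unfolding pos_def_mat_def A_def S_def by blast
qed

lemma exists_PG_thresholded_not_pos_def:
  fixes E E' :: "('n::finite \<times> 'n) set"
  assumes "irrefl E" and "sym E'" and "E' \<subseteq> E"
    and "(i, j) \<in> E" and "(j, i) \<in> E" and "(i, j) \<notin> E'" and "(i, j) \<in> E'\<^sup>*"
  shows "\<exists>A\<in>PG E. \<not> pos_def_mat (thresholded E' A)"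
proof -
  define T where "T = laplacian E' + coord_projection (- {v. (i, v) \<in> E'\<^sup>*})"
  obtain b where pd: "pos_def_mat (T + b *\<^sub>R sym_unit_mat i j)"
    using pos_def_perturbed_laplacian[OF assms(2,7)] unfolding T_def by blast
  have "i \<noteq> j" using assms(1,4) by (auto simp: irrefl_def)
  have "(j, i) \<notin> E'" using assms(2,6) by (auto dest: symD)
  have T0: "T $ u $ v = 0" if "u \<noteq> v" "(u, v) \<notin> E'" for u v
    using that by (simp add: T_def laplacian_eq_0 coord_projection_eq_0)
  have "sym_unit_mat i j $ u $ v = 0" if "u = v \<or> (u, v) \<in> E'" for u v
    using that \<open>i \<noteq> j\<close> \<open>(j, i) \<notin> E'\<close> assms(6) by (intro sym_unit_mat_eq_0) auto
  then have "thresholded E' (T + b *\<^sub>R sym_unit_mat i j) $ u $ v = T $ u $ v" for u v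
    using T0[of u v] by (auto simp: thresholded_def)
  then have "thresholded E' (T + b *\<^sub>R sym_unit_mat i j) = T" by (simp add: vec_eq_iff)
  moreover have "sym_unit_mat i j $ u $ v = 0" if "(u, v) \<notin> E" for u v
    using that assms(4,5) by (intro sym_unit_mat_eq_0) auto
  with T0 assms(3) have "T + b *\<^sub>R sym_unit_mat i j \<in> PG E"
    using pd by (auto simp: PG_def)
  moreover have "\<not> pos_def_mat T"
    unfolding T_def by (rule laplacian_plus_coord_projection_not_pos_def[OF assms(2)])
  ultimately show ?thesis by metis
qed

lemma equiv_rtrancl: "sym K \<Longrightarrow> equiv UNIV (K\<^sup>*)"
  by (intro equivI refl_rtrancl sym_rtrancl trans_rtrancl) auto

lemma in_same_class_iff_rtrancl:
  assumes "sym K"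
  shows "(\<exists>B\<in>UNIV // K\<^sup>*. i \<in> B \<and> j \<in> B) \<longleftrightarrow> (i, j) \<in> K\<^sup>*"
proof
  assume "\<exists>B\<in>UNIV // K\<^sup>*. i \<in> B \<and> j \<in> B"
  then show "(i, j) \<in> K\<^sup>*" using in_quotient_imp_in_rel[OF equiv_rtrancl[OF assms]] by blast
next
  assume "(i, j) \<in> K\<^sup>*"
  then show "\<exists>B\<in>UNIV // K\<^sup>*. i \<in> B \<and> j \<in> B"
    by (intro bexI[of _ "K\<^sup>* `` {i}"]) (auto intro: quotientI)
qed

lemma edge_iff_if_thresholded_pos_def:
  fixes E E' :: "('n::finite \<times> 'n) set"
  assumes "sym E" and "irrefl E" and "sym E'" and "E' \<subseteq> E"
    and all: "\<forall>A\<in>PG E. pos_def_mat (thresholded E' A)"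
  shows "(i, j) \<in> E' \<longleftrightarrow> (i, j) \<in> E \<and> (i, j) \<in> E'\<^sup>*"
proof
  assume "(i, j) \<in> E \<and> (i, j) \<in> E'\<^sup>*"
  moreover have "(j, i) \<in> E" if "(i, j) \<in> E" using assms(1) that by (rule symD)
  ultimately show "(i, j) \<in> E'"
    using exists_PG_thresholded_not_pos_def[OF assms(2-4), of i j] all by blast
qed (use assms(4) in auto)

theorem theorem4:
  fixes E E' :: "('n::finite \<times> 'n) set"
  assumes "sym E" and "irrefl E" and "sym E'" and "E' \<subseteq> E"
  shows "(\<forall>A \<in> PG E. pos_def_mat (thresholded E' A)) \<longleftrightarrow>
         (\<exists>P. partition_on (UNIV :: 'n set) P \<and>
              (\<forall>i j. (i, j) \<in> E' \<longleftrightarrow> (i, j) \<in> E \<and> (\<exists>B \<in> P. i \<in> B \<and> j \<in> B)))"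
proof
  assume "\<forall>A \<in> PG E. pos_def_mat (thresholded E' A)"
  then have "(i, j) \<in> E' \<longleftrightarrow> (i, j) \<in> E \<and> (\<exists>B \<in> UNIV // E'\<^sup>*. i \<in> B \<and> j \<in> B)" for i j
    unfolding in_same_class_iff_rtrancl[OF assms(3)]
    by (rule edge_iff_if_thresholded_pos_def[OF assms])
  then show "\<exists>P. partition_on UNIV P \<and>
      (\<forall>i j. (i, j) \<in> E' \<longleftrightarrow> (i, j) \<in> E \<and> (\<exists>B \<in> P. i \<in> B \<and> j \<in> B))"
    using partition_on_quotient[OF equiv_rtrancl[OF assms(3)]] by blast
qed (use pos_def_thresholded_if_partition in blast)

end
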